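(* Let $\omega\in\mathbb{F}_8$ be a root of $y^3+y+1$, let $m\in\mathbb{N}$ and let $L,M,N$ be nonempty subsets of $[m]$ such that at least two of the sets $L\setminus(M\cup N)$, $M\setminus(N\cup L)$, $N\setminus(L\cup M)$ are nonempty. Let $D=\Delta_L+\omega\Delta_M+\omega^2\Delta_N\subseteq\mathbb{F}_8^m$ and $D^*=D\setminus\{0\}$. Then $C_{D^*}$ is a $3$-weight linear code over $\mathbb{F}_8$ of length $2^{|L|+|M|+|N|}-1$, dimension $|L\cup M\cup N|$ and minimum distance $2^{|L|+|M|+|N|-1}$; its codewords have weights $0$, $2^{|L|+|M|+|N|-1}$, $6\cdot 2^{|L|+|M|+|N|-3}$ and $7\cdot 2^{|L|+|M|+|N|-3}$. Moreover, if $A_i$ denotes the number of codewords of $C_{D^*}$ of weight $i$ and $Z_i=|\{v\in\mathbb{F}_8^m: wt(c_{D^*}(v))=i\}|$ for $0\le i\le|D^*|$, then $Z_0=2^{3(m-|L\cup M\cup N|)}$ and $Z_i=Z_0A_i$.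
   Context: $[m]=\{1,\dots,m\}$. For $w\in\mathbb{F}_2^m$, $\mathrm{Supp}(w)=\{i: w_i\neq0\}$; for $L\subseteq[m]$, $\Delta_L=\{w\in\mathbb{F}_2^m:\mathrm{Supp}(w)\subseteq L\}$. For $A,B,C\subseteq\mathbb{F}_2^m$, $A+\omega B+\omega^2C=\{a+\omega b+\omega^2c: a\in A,b\in B,c\in C\}$. For an ordered finite set $P\subseteq\mathbb{F}_8^m$, $c_P(v)=(v\cdot d)_{d\in P}$ with $v\cdot d=\sum_iv_id_i$, and $C_P=\{c_P(v): v\in\mathbb{F}_8^m\}$. An $l$-weight code is one whose nonzero codewords take exactly $l$ distinct Hamming weights. *)

theory Defs
  imports Complex_Main "HOL-Library.Function_Algebras"
begin

text \<open>Vectors of F^m are functions nat => 'a vanishing outside [m] = {1..m}.\<close>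

definition vecs :: "nat \<Rightarrow> (nat \<Rightarrow> 'a::zero) set" where
  "vecs m = {v. \<forall>i. i \<notin> {1..m} \<longrightarrow> v i = 0}"

definition Delta :: "nat set \<Rightarrow> (nat \<Rightarrow> 'a::{zero,one}) set" where
  "Delta L = {w. \<forall>i. w i \<in> {0, 1} \<and> (w i \<noteq> 0 \<longrightarrow> i \<in> L)}"

definition comb3 :: "'a::comm_ring_1 \<Rightarrow> (nat \<Rightarrow> 'a) set \<Rightarrow> (nat \<Rightarrow> 'a) set \<Rightarrow> (nat \<Rightarrow> 'a) set \<Rightarrow> (nat \<Rightarrow> 'a) set" where
  "comb3 \<omega> A B C = {(\<lambda>i. a i + \<omega> * b i + \<omega>^2 * c i) | a b c. a \<in> A \<and> b \<in> B \<and> c \<in> C}"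

definition dotp :: "nat \<Rightarrow> (nat \<Rightarrow> 'a::comm_ring_1) \<Rightarrow> (nat \<Rightarrow> 'a) \<Rightarrow> 'a" where
  "dotp m v d = (\<Sum>i\<in>{1..m}. v i * d i)"

text \<open>Codeword c_P(v), indexed by the elements d of P (coordinates outside P are 0).\<close>
definition cw :: "nat \<Rightarrow> (nat \<Rightarrow> 'a::comm_ring_1) set \<Rightarrow> (nat \<Rightarrow> 'a) \<Rightarrow> ((nat \<Rightarrow> 'a) \<Rightarrow> 'a)" where
  "cw m P v = (\<lambda>d. if d \<in> P then dotp m v d else 0)"

definition code :: "nat \<Rightarrow> (nat \<Rightarrow> 'a::comm_ring_1) set \<Rightarrow> ((nat \<Rightarrow> 'a) \<Rightarrow> 'a) set" where
  "code m P = cw m P ` vecs m"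

definition wt :: "'b set \<Rightarrow> ('b \<Rightarrow> 'a::zero) \<Rightarrow> nat" where
  "wt P c = card {d \<in> P. c d \<noteq> 0}"

definition cscale :: "'a::times \<Rightarrow> ('b \<Rightarrow> 'a) \<Rightarrow> ('b \<Rightarrow> 'a)" where
  "cscale x f = (\<lambda>d. x * f d)"

definition weights :: "'b set \<Rightarrow> ('b \<Rightarrow> 'a::zero) set \<Rightarrow> nat set" where
  "weights P C = wt P ` (C - {0})"

definition l_weight_code :: "nat \<Rightarrow> 'b set \<Rightarrow> ('b \<Rightarrow> 'a::zero) set \<Rightarrow> bool" where
  "l_weight_code l P C \<longleftrightarrow> card (weights P C) = l"

definition min_dist :: "'b set \<Rightarrow> ('b \<Rightarrow> 'a::zero) set \<Rightarrow> nat" where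
  "min_dist P C = Min (weights P C)"

end

theory Submission
  imports Defs "HOL-Computational_Algebra.Primes" "HOL-Library.FuncSet"
begin

text \<open>
  Since \<open>F\<^sub>8\<close> has characteristic 2 and \<open>y^3 + y + 1\<close> is irreducible over \<open>F\<^sub>2\<close>, the elements
  \<open>1, \<omega>, \<omega>^2\<close> are linearly independent over \<open>F\<^sub>2\<close>; hence \<open>D\<close> is an \<open>F\<^sub>2\<close>-subspace of
  \<open>F\<^sub>8^m\<close> with \<open>2^s\<close> elements, \<open>s = |L| + |M| + |N|\<close>. For fixed \<open>v\<close> the map \<open>d \<mapsto> v \<cdot> d\<close> is
  additive on \<open>D\<close>, so its image is a subgroup of \<open>F\<^sub>8\<close> of order \<open>2^k\<close> with \<open>k \<le> 3\<close>, and every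
  value is taken \<open>2^(s-k)\<close> times. Hence the weight of \<open>c(v)\<close> is \<open>2^s - 2^(s-k)\<close>, i.e. one of
  \<open>0, 2^(s-1), 6 \<cdot> 2^(s-3), 7 \<cdot> 2^(s-3)\<close>. A coordinate lying only in one of \<open>L, M, N\<close>, one lying
  only in another, and a coordinate of the third set give vectors whose images have 2, 4 and 8
  elements, so all three nonzero weights occur. Finally \<open>v \<mapsto> c(v)\<close> is linear and its kernel consists
  of the vectors vanishing on \<open>L \<union> M \<union> N\<close>, which yields the dimension, \<open>Z\<^sub>0\<close> and \<open>Z\<^sub>i = Z\<^sub>0 A\<^sub>i\<close>.
\<close>

section \<open>Counting\<close>

lemma card_filter_hom_image:
  fixes f :: "'v::ab_group_add \<Rightarrow> 'w::ab_group_add"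
  assumes fin: "finite V"
    and diff: "\<And>x y. x \<in> V \<Longrightarrow> y \<in> V \<Longrightarrow> x - y \<in> V"
    and hom: "\<And>x y. x \<in> V \<Longrightarrow> y \<in> V \<Longrightarrow> f (x - y) = f x - f y"
  shows "card {v\<in>V. P (f v)} = card {w\<in>f ` V. P w} * card {v\<in>V. f v = 0}"
proof -
  let ?A = "{v\<in>V. P (f v)}" and ?K = "{v\<in>V. f v = 0}"
  have fiber: "card {v\<in>?A. f v = f u} = card ?K" if "u \<in> ?A" for u
  proof -
    have "{v\<in>?A. f v = f u} = (\<lambda>z. u - z) ` ?K"
    proof (intro set_eqI iffI)
      fix v assume v: "v \<in> {v\<in>?A. f v = f u}"
      then have "u - v \<in> ?K" using that diff hom by auto
      moreover have "v = u - (u - v)" by simp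
      ultimately show "v \<in> (\<lambda>z. u - z) ` ?K" by blast
    qed (use that diff hom in auto)
    moreover have "inj_on (\<lambda>z. u - z) ?K" by (rule inj_onI) simp
    ultimately show ?thesis by (simp add: card_image)
  qed
  have "card ?A = (\<Sum>w\<in>f ` ?A. card {v\<in>?A. f v = w})"
    unfolding card_eq_sum by (rule sum.image_gen[of ?A "\<lambda>_. 1" f]) (simp add: fin)
  also have "\<dots> = (\<Sum>w\<in>f ` ?A. card ?K)"
    by (rule sum.cong[OF refl], erule imageE, hypsubst, erule fiber)
  also have "f ` ?A = {w\<in>f ` V. P w}" by auto
  finally show ?thesis by simp
qed

lemma card_vanishing_outside:
  assumes "finite (UNIV :: 'a::zero set)" "finite S"
  shows "card {v :: 'i \<Rightarrow> 'a. \<forall>i. i \<notin> S \<longrightarrow> v i = 0} = card (UNIV :: 'a set) ^ card S"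
    and "finite {v :: 'i \<Rightarrow> 'a. \<forall>i. i \<notin> S \<longrightarrow> v i = 0}"
proof -
  have bij: "bij_betw (\<lambda>v. restrict v S) {v :: 'i \<Rightarrow> 'a. \<forall>i. i \<notin> S \<longrightarrow> v i = 0} (S \<rightarrow>\<^sub>E UNIV)"
    by (rule bij_betw_byWitness[where f' = "\<lambda>w i. if i \<in> S then w i else 0"])
       (auto simp: fun_eq_iff PiE_def extensional_def)
  show "card {v :: 'i \<Rightarrow> 'a. \<forall>i. i \<notin> S \<longrightarrow> v i = 0} = card (UNIV :: 'a set) ^ card S"
    using bij_betw_same_card[OF bij] assms(2) by (simp add: card_PiE)
  show "finite {v :: 'i \<Rightarrow> 'a. \<forall>i. i \<notin> S \<longrightarrow> v i = 0}"
    using bij_betw_finite[OF bij] assms by (simp add: finite_PiE)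
qed

lemma card_Delta:
  assumes "finite X"
  shows "card (Delta X :: (nat \<Rightarrow> 'a::zero_neq_one) set) = 2 ^ card X"
proof -
  let ?ind = "\<lambda>S i. if i \<in> S then (1::'a) else 0"
  have "Delta X = ?ind ` Pow X"
  proof (intro set_eqI iffI)
    fix w :: "nat \<Rightarrow> 'a" assume "w \<in> Delta X"
    then have "w = ?ind {i. w i \<noteq> 0}" "{i. w i \<noteq> 0} \<in> Pow X"
      by (auto simp: Delta_def fun_eq_iff)
    then show "w \<in> ?ind ` Pow X" by blast
  qed (auto simp: Delta_def split: if_splits)
  moreover have "inj_on ?ind (Pow X)"
    by (rule inj_onI) (metis (mono_tags) one_neq_zero subsetI subset_antisym)
  ultimately show ?thesis
    using assms by (simp add: card_image card_Pow)
qed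

lemma two_pow_diff_two_pow:
  assumes "3 \<le> s" "k \<le> 3"
  shows "(2::nat)^s - 2^(s-k) = [0, 2^(s-1), 6 * 2^(s-3), 7 * 2^(s-3)] ! k"
proof -
  obtain t where "s = t + 3" using assms(1) by (metis add.commute le_Suc_ex)
  moreover have "k = 0 \<or> k = 1 \<or> k = 2 \<or> k = 3" using assms(2) by auto
  ultimately show ?thesis by (elim disjE) (simp_all add: power_add)
qed

lemma weight_values_card_Min:
  assumes "3 \<le> s"
  shows "card {2^(s-1), 6 * 2^(s-3), 7 * 2^(s-3) :: nat} = 3"
    and "Min {2^(s-1), 6 * 2^(s-3), 7 * 2^(s-3) :: nat} = 2^(s-1)"
proof -
  obtain t where s: "s = t + 3"
    using assms by (metis add.commute le_Suc_ex)
  show "card {2^(s-1), 6 * 2^(s-3), 7 * 2^(s-3) :: nat} = 3"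
    "Min {2^(s-1), 6 * 2^(s-3), 7 * 2^(s-3) :: nat} = 2^(s-1)"
    by (simp_all add: s power_add min_def)
qed

section \<open>Codes defined by point sets\<close>

lemma sum_fun_apply: "(\<Sum>i\<in>A. f i) x = (\<Sum>i\<in>A. f i x)"
  by (induction A rule: infinite_finite_induct) auto

lemma module_cscale: "module (cscale :: 'a::comm_ring_1 \<Rightarrow> ('b \<Rightarrow> 'a) \<Rightarrow> 'b \<Rightarrow> 'a)"
  unfolding module_def by (simp add: cscale_def fun_eq_iff algebra_simps)

interpretation fun_space: vector_space "cscale :: 'a::field \<Rightarrow> ('b \<Rightarrow> 'a) \<Rightarrow> 'b \<Rightarrow> 'a"
  using module_cscale by (simp add: vector_space_def module_def)

lemma dim_span_eq_card_if_dual_points: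
  fixes b :: "'i \<Rightarrow> 'b \<Rightarrow> 'a::field"
  assumes fin: "finite I" and dual: "\<And>i j. i \<in> I \<Longrightarrow> j \<in> I \<Longrightarrow> b i (t j) \<noteq> 0 \<longleftrightarrow> i = j"
  shows "fun_space.dim (fun_space.span (b ` I)) = card I"
proof -
  have inj: "inj_on b I"
    by (rule inj_onI) (metis dual)
  have "fun_space.independent (b ` I)"
  proof (rule fun_space.independent_if_scalars_zero)
    fix u x assume sum: "(\<Sum>y\<in>b ` I. cscale (u y) y) = 0" and "x \<in> b ` I"
    then obtain j where j: "j \<in> I" "x = b j" by blast
    have "0 = (\<Sum>y\<in>b ` I. cscale (u y) y) (t j)" by (simp add: sum)
    also have "\<dots> = (\<Sum>i\<in>I. u (b i) * b i (t j))"
      by (simp add: sum.reindex[OF inj] cscale_def sum_fun_apply)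
    also have "\<dots> = (\<Sum>i\<in>I. if i = j then u x * b j (t j) else 0)"
      by (rule sum.cong) (use j dual in auto)
    also have "\<dots> = u x * b j (t j)"
      using fin j by simp
    finally show "u x = 0" using dual[OF j(1) j(1)] by simp
  qed (use fin in simp)
  then show ?thesis
    using card_image[OF inj] by (simp add: fun_space.dim_eq_card_independent)
qed

lemma dotp_diff_right: "dotp m v (x - y) = dotp m v x - dotp m v y"
  by (simp add: dotp_def right_diff_distrib sum_subtractf)

lemma dotp_add_left: "dotp m (v + w) d = dotp m v d + dotp m w d"
  by (simp add: dotp_def distrib_right sum.distrib)

lemma dotp_fun_upd_left:
  assumes "i \<in> {1..m}"
  shows "dotp m (0(i := c)) d = c * d i"
proof -
  have "dotp m (0(i := c)) d = (\<Sum>l\<in>{1..m}. if l = i then c * d i else 0)"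
    unfolding dotp_def by (rule sum.cong) auto
  then show ?thesis using assms by simp
qed

lemma dotp_fun_upd_right:
  assumes "i \<in> {1..m}"
  shows "dotp m v (0(i := c)) = v i * c"
proof -
  have "dotp m v (0(i := c)) = (\<Sum>l\<in>{1..m}. if l = i then v i * c else 0)"
    unfolding dotp_def by (rule sum.cong) auto
  then show ?thesis using assms by simp
qed

lemma module_hom_cw: "module_hom cscale cscale (cw m P)"
  unfolding module_hom_iff
  by (auto simp: module_cscale cw_def cscale_def dotp_def fun_eq_iff
      distrib_right sum.distrib sum_distrib_left mult.assoc)

lemma subspace_vecs: "fun_space.subspace (vecs m)"
  by (auto simp: fun_space.subspace_def vecs_def cscale_def)

lemma subspace_code: "fun_space.subspace (code m P)"
  unfolding code_def using module_hom_cw subspace_vecs by (rule module_hom.subspace_image)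

lemma finite_vecs: "finite (UNIV :: 'a::zero set) \<Longrightarrow> finite (vecs m :: (nat \<Rightarrow> 'a) set)"
  using card_vanishing_outside(2)[of "{1..m}"] by (simp add: vecs_def)

lemma wt_cw_eq_0_iff: "finite P \<Longrightarrow> wt P (cw m P v) = 0 \<longleftrightarrow> cw m P v = 0"
  by (auto simp: wt_def cw_def fun_eq_iff)

lemma wt_zero [simp]: "wt P 0 = 0"
  by (simp add: wt_def)

lemma wt_code_eq_0_iff: "finite P \<Longrightarrow> c \<in> code m P \<Longrightarrow> wt P c = 0 \<longleftrightarrow> c = 0"
  by (auto simp: code_def wt_cw_eq_0_iff)

lemma weights_code:
  assumes "finite P"
  shows "weights P (code m P) = wt P ` code m P - {0}"
  using wt_code_eq_0_iff[OF assms] unfolding weights_def by (auto simp: image_iff)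

lemma wt_cw_Diff_zero:
  assumes "finite D" "0 \<in> D"
  shows "wt (D - {0}) (cw m (D - {0}) v) = card D - card {d\<in>D. dotp m v d = 0}"
proof -
  have "{d\<in>D - {0}. cw m (D - {0}) v d \<noteq> 0} = D - {d\<in>D. dotp m v d = 0}"
    by (auto simp: cw_def dotp_def)
  then show ?thesis
    using assms(1) by (simp add: wt_def card_Diff_subset)
qed

lemma card_wt_preimage:
  assumes "finite (UNIV :: 'a::field set)"
  shows "card {v\<in>vecs m. wt P (cw m P v) = i}
    = card {c\<in>code m P. wt P c = i} * card {v\<in>vecs m. cw m P v = (0 :: (nat \<Rightarrow> 'a) \<Rightarrow> 'a)}"
  unfolding code_def
  by (rule card_filter_hom_image)
     (use finite_vecs[OF assms] fun_space.subspace_diff[OF subspace_vecs] module_hom.diff[OF module_hom_cw] in auto)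

section \<open>The field with eight elements\<close>

lemma of_nat_card_UNIV_eq_0:
  assumes "finite (UNIV :: 'a::ring_1 set)"
  shows "of_nat (card (UNIV :: 'a set)) = (0::'a)"
proof -
  have "bij (\<lambda>x::'a. x + 1)"
    by (rule bijI) (auto intro: injI surjI[of _ "\<lambda>x. x - 1"])
  then have "(\<Sum>x\<in>UNIV. x + 1) = (\<Sum>x\<in>(UNIV::'a set). x)"
    by (rule sum.reindex_bij_betw)
  then show ?thesis
    by (simp add: sum.distrib)
qed

text \<open>In characteristic 2 the coefficients \<open>{0, 1}\<close> form the prime field, so this is linear
  independence over \<open>F\<^sub>2\<close>.\<close>

definition F2_independent :: "'a::field \<Rightarrow> 'a \<Rightarrow> 'a \<Rightarrow> bool" where
  "F2_independent \<alpha> \<beta> \<gamma> \<longleftrightarrow>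
     (\<forall>x\<in>{0,1}. \<forall>y\<in>{0,1}. \<forall>z\<in>{0,1}. x * \<alpha> + y * \<beta> + z * \<gamma> = 0 \<longrightarrow> x = 0 \<and> y = 0 \<and> z = 0)"

lemma F2_independentD:
  "F2_independent \<alpha> \<beta> \<gamma> \<Longrightarrow> x \<in> {0, 1} \<Longrightarrow> y \<in> {0, 1} \<Longrightarrow> z \<in> {0, 1}
    \<Longrightarrow> x * \<alpha> + y * \<beta> + z * \<gamma> = 0 \<Longrightarrow> x = 0 \<and> y = 0 \<and> z = 0"
  unfolding F2_independent_def by blast

lemma F2_independent_rotate: "F2_independent \<alpha> \<beta> \<gamma> \<Longrightarrow> F2_independent \<beta> \<gamma> \<alpha>"
  unfolding F2_independent_def by (simp add: ac_simps)

lemma F2_independent_swap: "F2_independent \<alpha> \<beta> \<gamma> \<Longrightarrow> F2_independent \<alpha> \<gamma> \<beta>"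
  unfolding F2_independent_def by (simp add: ac_simps)

locale gf8 =
  fixes \<omega> :: "'a::field"
  assumes card_UNIV: "card (UNIV :: 'a set) = 8"
    and root: "\<omega>^3 + \<omega> + 1 = 0"
begin

lemma finite_UNIV: "finite (UNIV :: 'a set)"
  using card_UNIV card.infinite by fastforce

lemma one_plus_one: "(1::'a) + 1 = 0"
proof -
  have "(2::'a)^3 = 0"
  proof -
    have "(2::'a)^3 = of_nat 8" by simp
    then show ?thesis using of_nat_card_UNIV_eq_0[OF finite_UNIV] by (simp only: card_UNIV)
  qed
  then have "(2::'a) = 0" by (metis power_eq_0_iff)
  then show ?thesis by simp
qed

lemma add_self: "(x::'a) + x = 0"
  using one_plus_one by (metis distrib_left mult_1_right mult_zero_right)

lemma uminus_eq: "- (x::'a) = x"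
  using add_self by (rule minus_unique)

lemma diff_eq_add: "(x::'a) - y = x + y"
  by (simp add: uminus_eq)

lemma add_eq_0_iff: "(x::'a) + y = 0 \<longleftrightarrow> x = y"
  by (metis diff_eq_add right_minus_eq)

lemma fun_diff_eq_add: "(x :: 'b \<Rightarrow> 'a) - y = x + y"
  by (simp add: fun_eq_iff diff_eq_add)

lemma cube: "\<omega>^3 = \<omega> + 1"
  using root by (metis add_eq_0_iff add.assoc)

lemma F2_independent: "F2_independent 1 \<omega> (\<omega>^2)"
proof -
  have "\<omega> \<noteq> 0" "\<omega> \<noteq> 1" using root one_plus_one by auto
  have "\<omega>^2 \<noteq> 1"
    by (simp add: \<open>\<omega> \<noteq> 1\<close> power2_eq_1_iff uminus_eq)
  have "\<omega>^2 \<noteq> \<omega>"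
    by (simp add: \<open>\<omega> \<noteq> 0\<close> \<open>\<omega> \<noteq> 1\<close> power2_eq_square)
  have "1 + \<omega> + \<omega>^2 \<noteq> 0"
  proof
    assume "1 + \<omega> + \<omega>^2 = 0"
    then have sq: "\<omega>^2 = \<omega> + 1" by (simp add: add_eq_0_iff add.commute)
    have "\<omega>^3 = \<omega> * \<omega>^2" by (simp add: power3_eq_cube power2_eq_square)
    also have "\<dots> = \<omega> * (\<omega> + 1)" by (simp only: sq)
    also have "\<dots> = \<omega>^2 + \<omega>" by (simp add: distrib_left power2_eq_square)
    also have "\<dots> = 1" by (simp add: sq add.commute add.left_commute add_self)
    finally show False using cube \<open>\<omega> \<noteq> 0\<close> by simp
  qed
  show ?thesis unfolding F2_independent_def
    using \<open>\<omega> \<noteq> 0\<close> \<open>\<omega> \<noteq> 1\<close> \<open>\<omega>^2 \<noteq> 1\<close> \<open>\<omega>^2 \<noteq> \<omega>\<close> \<open>1 + \<omega> + \<omega>^2 \<noteq> 0\<close>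
    by (auto simp: add_eq_0_iff)
qed

lemma F2_independent_distinct:
  fixes \<alpha> \<beta> \<gamma> :: 'a
  assumes "F2_independent \<alpha> \<beta> \<gamma>"
  shows "distinct [0, \<alpha>, \<beta>, \<alpha> + \<beta>, \<gamma>]"
  using assms by (auto simp: F2_independent_def add_eq_0_iff)

lemma combination_eq_imp_eq:
  assumes "x \<in> {0, 1}" "y \<in> {0, 1}" "z \<in> {0, 1}" "x' \<in> {0, 1}" "y' \<in> {0, 1}" "z' \<in> {0, 1}"
    and eq: "x + \<omega> * y + \<omega>^2 * z = x' + \<omega> * y' + \<omega>^2 * z'"
  shows "x = x' \<and> y = y' \<and> z = z'"
proof -
  have "(x + x') * 1 + (y + y') * \<omega> + (z + z') * \<omega>^2
      = (x + \<omega> * y + \<omega>^2 * z) + (x' + \<omega> * y' + \<omega>^2 * z')"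
    by (simp add: algebra_simps)
  also have "\<dots> = 0"
    unfolding add_eq_0_iff by (rule eq)
  finally have "(x + x') * 1 + (y + y') * \<omega> + (z + z') * \<omega>^2 = 0" .
  moreover have "x + x' \<in> {0, 1}" "y + y' \<in> {0, 1}" "z + z' \<in> {0, 1}"
    using assms(1-6) one_plus_one by auto
  ultimately have "x + x' = 0 \<and> y + y' = 0 \<and> z + z' = 0"
    using F2_independentD[OF F2_independent] by blast
  then show ?thesis
    by (simp add: add_eq_0_iff)
qed

lemma Delta_add:
  assumes "a \<in> Delta X" "b \<in> Delta X"
  shows "a + b \<in> (Delta X :: (nat \<Rightarrow> 'a) set)"
  unfolding Delta_def
proof (intro CollectI allI)
  fix i
  have "a i \<in> {0, 1}" "b i \<in> {0, 1}" "a i \<noteq> 0 \<longrightarrow> i \<in> X" "b i \<noteq> 0 \<longrightarrow> i \<in> X"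
    using assms by (auto simp: Delta_def)
  then show "(a + b) i \<in> {0, 1} \<and> ((a + b) i \<noteq> 0 \<longrightarrow> i \<in> X)"
    using one_plus_one by auto
qed

end

section \<open>The code \<open>C\<^bsub>D*\<^esub>\<close>\<close>

locale code_setting = gf8 +
  fixes m :: nat and L M N :: "nat set"
  assumes subset: "L \<subseteq> {1..m}" "M \<subseteq> {1..m}" "N \<subseteq> {1..m}"
    and nonempty: "L \<noteq> {}" "M \<noteq> {}" "N \<noteq> {}"
begin

definition D :: "(nat \<Rightarrow> 'a) set" where "D = comb3 \<omega> (Delta L) (Delta M) (Delta N)"
definition Ds :: "(nat \<Rightarrow> 'a) set" where "Ds = D - {0}"
definition C :: "((nat \<Rightarrow> 'a) \<Rightarrow> 'a) set" where "C = code m Ds"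
definition U :: "nat set" where "U = L \<union> M \<union> N"
definition s :: nat where "s = card L + card M + card N"
definition dotp_values :: "(nat \<Rightarrow> 'a) \<Rightarrow> 'a set" where "dotp_values v = (\<lambda>d. dotp m v d) ` D"

lemma finite_LMN: "finite L" "finite M" "finite N"
  using subset by (auto intro: finite_subset)

lemma U_subset: "U \<subseteq> {1..m}"
  using subset by (auto simp: U_def)

lemma three_le_s: "3 \<le> s"
proof -
  have "card L \<ge> 1" "card M \<ge> 1" "card N \<ge> 1"
    using finite_LMN nonempty by (simp_all add: Suc_le_eq card_gt_0_iff)
  then show ?thesis by (simp add: s_def)
qed

lemma mem_D_iff: "d \<in> D \<longleftrightarrow> (\<exists>a\<in>Delta L. \<exists>b\<in>Delta M. \<exists>c\<in>Delta N. d = (\<lambda>i. a i + \<omega> * b i + \<omega>^2 * c i))"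
  by (auto simp: D_def comb3_def)

lemma combination_in_D:
  "a \<in> Delta L \<Longrightarrow> b \<in> Delta M \<Longrightarrow> c \<in> Delta N \<Longrightarrow> (\<lambda>i. a i + \<omega> * b i + \<omega>^2 * c i) \<in> D"
  unfolding mem_D_iff by blast

lemma zero_in_D: "0 \<in> D"
  unfolding mem_D_iff by (intro bexI[of _ 0]) (auto simp: Delta_def fun_eq_iff)

lemma add_in_D:
  assumes "x \<in> D" "y \<in> D"
  shows "x + y \<in> D"
proof -
  obtain a b c where abc: "a \<in> Delta L" "b \<in> Delta M" "c \<in> Delta N"
    and x: "x = (\<lambda>i. a i + \<omega> * b i + \<omega>^2 * c i)"
    using assms(1) mem_D_iff by blast
  obtain a' b' c' where abc': "a' \<in> Delta L" "b' \<in> Delta M" "c' \<in> Delta N"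
    and y: "y = (\<lambda>i. a' i + \<omega> * b' i + \<omega>^2 * c' i)"
    using assms(2) mem_D_iff by blast
  have "x + y = (\<lambda>i. (a + a') i + \<omega> * (b + b') i + \<omega>^2 * (c + c') i)"
    by (simp add: x y fun_eq_iff algebra_simps)
  then show ?thesis
    using combination_in_D[OF Delta_add[OF abc(1) abc'(1)] Delta_add[OF abc(2) abc'(2)]
        Delta_add[OF abc(3) abc'(3)]]
    by simp
qed

lemma diff_in_D: "x \<in> D \<Longrightarrow> y \<in> D \<Longrightarrow> x - y \<in> D"
  by (simp add: fun_diff_eq_add add_in_D)

lemma unit_in_D:
  shows "i \<in> L \<Longrightarrow> 0(i := 1) \<in> D"
    and "i \<in> M \<Longrightarrow> 0(i := \<omega>) \<in> D"
    and "i \<in> N \<Longrightarrow> 0(i := \<omega>^2) \<in> D"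
proof -
  have unit: "0(i := 1) \<in> Delta X" if "i \<in> X" for X
    using that by (simp add: Delta_def)
  have zero: "0 \<in> Delta X" for X
    by (simp add: Delta_def)
  have "0(i := 1) = (\<lambda>l. (0(i := 1)) l + \<omega> * 0 l + \<omega>^2 * 0 l)"
    "0(i := \<omega>) = (\<lambda>l. 0 l + \<omega> * (0(i := 1)) l + \<omega>^2 * 0 l)"
    "0(i := \<omega>^2) = (\<lambda>l. 0 l + \<omega> * 0 l + \<omega>^2 * (0(i := 1)) l)"
    by (simp_all add: fun_eq_iff)
  then show "i \<in> L \<Longrightarrow> 0(i := 1) \<in> D" "i \<in> M \<Longrightarrow> 0(i := \<omega>) \<in> D"
    "i \<in> N \<Longrightarrow> 0(i := \<omega>^2) \<in> D"
    using combination_in_D unit zero by metis+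
qed

lemma D_apply_cases:
  assumes "d \<in> D"
  obtains x y z where "x \<in> {0, 1}" "y \<in> {0, 1}" "z \<in> {0, 1}"
    "x \<noteq> 0 \<Longrightarrow> i \<in> L" "y \<noteq> 0 \<Longrightarrow> i \<in> M" "z \<noteq> 0 \<Longrightarrow> i \<in> N"
    "d i = x + \<omega> * y + \<omega>^2 * z"
proof -
  obtain a b c where "a \<in> Delta L" "b \<in> Delta M" "c \<in> Delta N"
    and "d = (\<lambda>i. a i + \<omega> * b i + \<omega>^2 * c i)"
    using assms mem_D_iff by blast
  then show thesis
    by (intro that[of "a i" "b i" "c i"]) (auto simp: Delta_def)
qed

lemma D_apply:
  assumes "d \<in> D"
  shows "i \<notin> U \<Longrightarrow> d i = 0"
    and "i \<in> L - (M \<union> N) \<Longrightarrow> d i \<in> {0, 1}"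
    and "i \<in> M - (N \<union> L) \<Longrightarrow> d i \<in> {0, \<omega>}"
    and "i \<in> N - (L \<union> M) \<Longrightarrow> d i \<in> {0, \<omega>^2}"
  by (rule D_apply_cases[OF assms, of i]; auto simp: U_def)+

lemma card_D: "card D = 2^s"
proof -
  let ?g = "\<lambda>(a, b, c) i. a i + \<omega> * b i + \<omega>^2 * c i"
  have D_eq: "D = ?g ` (Delta L \<times> Delta M \<times> Delta N)"
    by (auto simp: mem_D_iff image_iff; blast)
  have "inj_on ?g (Delta L \<times> Delta M \<times> Delta N)"
  proof (rule inj_onI)
    fix x y
    assume "x \<in> Delta L \<times> Delta M \<times> Delta N" "y \<in> Delta L \<times> Delta M \<times> Delta N"
      and eq_xy: "?g x = ?g y"
    obtain a b c a' b' c' where xy: "x = (a, b, c)" "y = (a', b', c')"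
      by (cases x, cases y) auto
    have mem: "a \<in> Delta L" "b \<in> Delta M" "c \<in> Delta N"
      "a' \<in> Delta L" "b' \<in> Delta M" "c' \<in> Delta N"
      using \<open>x \<in> _\<close> \<open>y \<in> _\<close> xy by auto
    have eq: "(\<lambda>i. a i + \<omega> * b i + \<omega>^2 * c i) = (\<lambda>i. a' i + \<omega> * b' i + \<omega>^2 * c' i)"
      using eq_xy xy by simp
    have "a i = a' i \<and> b i = b' i \<and> c i = c' i" for i
      using mem fun_cong[OF eq, of i] by (intro combination_eq_imp_eq) (auto simp: Delta_def)
    then show "x = y"
      by (simp add: xy fun_eq_iff)
  qed
  then have "card D = card (Delta L \<times> Delta M \<times> Delta N :: ((nat \<Rightarrow> 'a) \<times> (nat \<Rightarrow> 'a) \<times> (nat \<Rightarrow> 'a)) set)"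
    unfolding D_eq by (rule card_image)
  then show ?thesis
    using finite_LMN by (simp add: card_cartesian_product card_Delta s_def power_add)
qed

lemma finite_D: "finite D"
  using card_D by (metis card.infinite power_not_zero zero_neq_numeral)

lemma card_Ds: "card Ds = 2^s - 1"
  using card_D finite_D zero_in_D by (simp add: Ds_def card_Diff_singleton)

lemma finite_Ds: "finite Ds"
  using finite_D by (simp add: Ds_def)

lemma card_D_eq_card_dotp_values_mult_kernel:
  "card D = card (dotp_values v) * card {d\<in>D. dotp m v d = 0}"
  using card_filter_hom_image[of D "dotp m v" "\<lambda>_. True", OF finite_D diff_in_D dotp_diff_right]
  by (simp add: dotp_values_def)

lemma card_dotp_values:
  obtains k where "k \<le> 3" "card (dotp_values v) = 2^k"
proof -
  have "card (dotp_values v) dvd 2^s"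
    using card_D_eq_card_dotp_values_mult_kernel[of v] card_D by (metis dvd_triv_left)
  then obtain k where k: "card (dotp_values v) = 2^k"
    by (auto simp: divides_primepow_nat)
  have "card (dotp_values v) \<le> card (UNIV :: 'a set)"
    using finite_UNIV by (rule card_mono) simp
  then have "(2::nat)^k \<le> 2^3"
    using k card_UNIV by simp
  then have "k \<le> 3"
    by (rule power_le_imp_le_exp[rotated]) simp
  then show thesis using k by (rule that)
qed

lemma wt_cw_Ds:
  assumes "card (dotp_values v) = 2^k" "k \<le> 3"
  shows "wt Ds (cw m Ds v) = [0, 2^(s-1), 6 * 2^(s-3), 7 * 2^(s-3)] ! k"
proof -
  have "2^k * card {d\<in>D. dotp m v d = 0} = 2^k * 2^(s-k)"
    using card_D_eq_card_dotp_values_mult_kernel[of v] card_D assms three_le_s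
    by (simp flip: power_add)
  then have "card {d\<in>D. dotp m v d = 0} = 2^(s-k)"
    by simp
  then have "wt Ds (cw m Ds v) = 2^s - 2^(s-k)"
    using wt_cw_Diff_zero[OF finite_D zero_in_D, of m v] card_D by (simp add: Ds_def)
  then show ?thesis
    using two_pow_diff_two_pow[OF three_le_s assms(2)] by simp
qed

text \<open>Typical instance: \<open>i\<close> lies only in \<open>L\<close>, \<open>j\<close> only in \<open>M\<close>, \<open>k \<in> N\<close>, and
  \<open>(\<alpha>, \<beta>, \<gamma>) = (1, \<omega>, \<omega>^2)\<close>.\<close>

context
  fixes i j k :: nat and \<alpha> \<beta> \<gamma> :: 'a
  assumes ijk: "i \<in> {1..m}" "j \<in> {1..m}" "k \<in> {1..m}" "distinct [i, j, k]"
    and at_i: "\<And>d. d \<in> D \<Longrightarrow> d i \<in> {0, \<alpha>}" and at_j: "\<And>d. d \<in> D \<Longrightarrow> d j \<in> {0, \<beta>}"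
    and units: "0(i := \<alpha>) \<in> D" "0(j := \<beta>) \<in> D" "0(k := \<gamma>) \<in> D"
    and indep: "F2_independent \<alpha> \<beta> \<gamma>"
begin

private lemma distinct_values: "distinct [0, \<alpha>, \<beta>, \<alpha> + \<beta>, \<gamma>]"
  using indep by (rule F2_independent_distinct)

private lemma sum_units_in_D: "0(i := \<alpha>) + 0(j := \<beta>) \<in> D"
  using units(1,2) by (rule add_in_D)

private lemma dotp_unit: "l \<in> {1..m} \<Longrightarrow> dotp m (0(l := 1)) d = d l"
  by (simp add: dotp_fun_upd_left)

lemma card_dotp_values_unit: "card (dotp_values (0(i := 1))) = 2"
proof -
  have "dotp_values (0(i := 1)) = (\<lambda>d. d i) ` D"
    using ijk by (simp add: dotp_values_def dotp_unit)
  also have "\<dots> = {0, \<alpha>}"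
  proof
    show "(\<lambda>d. d i) ` D \<subseteq> {0, \<alpha>}"
      using at_i by (rule image_subsetI)
    show "{0, \<alpha>} \<subseteq> (\<lambda>d. d i) ` D"
      using rev_image_eqI[OF zero_in_D, of 0 "\<lambda>d. d i"] rev_image_eqI[OF units(1), of \<alpha> "\<lambda>d. d i"]
      by simp
  qed
  finally show ?thesis
    using distinct_values by simp
qed

lemma card_dotp_values_two_units: "card (dotp_values (0(i := 1) + 0(j := 1))) = 4"
proof -
  have "dotp_values (0(i := 1) + 0(j := 1)) = (\<lambda>d. d i + d j) ` D"
    using ijk by (simp add: dotp_values_def dotp_add_left dotp_unit)
  also have "\<dots> = {0, \<alpha>, \<beta>, \<alpha> + \<beta>}"
  proof
    show "(\<lambda>d. d i + d j) ` D \<subseteq> {0, \<alpha>, \<beta>, \<alpha> + \<beta>}"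
    proof (rule image_subsetI)
      fix d assume "d \<in> D"
      then show "d i + d j \<in> {0, \<alpha>, \<beta>, \<alpha> + \<beta>}"
        using at_i[OF \<open>d \<in> D\<close>] at_j[OF \<open>d \<in> D\<close>] by auto
    qed
    show "{0, \<alpha>, \<beta>, \<alpha> + \<beta>} \<subseteq> (\<lambda>d. d i + d j) ` D"
      using rev_image_eqI[OF zero_in_D, of 0 "\<lambda>d. d i + d j"]
        rev_image_eqI[OF units(1), of \<alpha> "\<lambda>d. d i + d j"]
        rev_image_eqI[OF units(2), of \<beta> "\<lambda>d. d i + d j"]
        rev_image_eqI[OF sum_units_in_D, of "\<alpha> + \<beta>" "\<lambda>d. d i + d j"] ijk(4)
      by simp
  qed
  finally show ?thesis
    using distinct_values by simp
qed

lemma card_dotp_values_three_units: "card (dotp_values (0(i := 1) + 0(j := 1) + 0(k := 1))) = 8"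
proof -
  let ?v = "0(i := 1) + 0(j := 1) + 0(k := 1)"
  have "{0, \<alpha>, \<beta>, \<alpha> + \<beta>, \<gamma>} \<subseteq> (\<lambda>d. d i + d j + d k) ` D"
    using rev_image_eqI[OF zero_in_D, of 0 "\<lambda>d. d i + d j + d k"]
      rev_image_eqI[OF units(1), of \<alpha> "\<lambda>d. d i + d j + d k"]
      rev_image_eqI[OF units(2), of \<beta> "\<lambda>d. d i + d j + d k"]
      rev_image_eqI[OF sum_units_in_D, of "\<alpha> + \<beta>" "\<lambda>d. d i + d j + d k"]
      rev_image_eqI[OF units(3), of \<gamma> "\<lambda>d. d i + d j + d k"] ijk(4)
    by simp
  also have "\<dots> = dotp_values ?v"
    using ijk by (simp add: dotp_values_def dotp_add_left dotp_unit)
  finally have "card {0, \<alpha>, \<beta>, \<alpha> + \<beta>, \<gamma>} \<le> card (dotp_values ?v)"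
    using finite_D by (intro card_mono) (simp_all add: dotp_values_def)
  moreover have "card {0, \<alpha>, \<beta>, \<alpha> + \<beta>, \<gamma>} = 5"
    using distinct_card[OF distinct_values] by simp
  moreover obtain k' where "k' \<le> 3" "card (dotp_values ?v) = 2^k'"
    by (rule card_dotp_values)
  moreover from this(1) have "k' = 0 \<or> k' = 1 \<or> k' = 2 \<or> k' = 3"
    by auto
  ultimately show ?thesis
    by auto
qed

lemma dotp_values_card_2_4_8: "{2, 4, 8} \<subseteq> card ` dotp_values ` vecs m"
proof -
  have units_vecs: "(0 :: nat \<Rightarrow> 'a)(i := 1) \<in> vecs m" "(0 :: nat \<Rightarrow> 'a)(j := 1) \<in> vecs m"
    "(0 :: nat \<Rightarrow> 'a)(k := 1) \<in> vecs m"
    using ijk(1-3) by (simp_all add: vecs_def)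
  note add_vecs = fun_space.subspace_add[OF subspace_vecs[of m]]
  have two: "(0 :: nat \<Rightarrow> 'a)(i := 1) + 0(j := 1) \<in> vecs m"
    by (rule add_vecs[OF units_vecs(1,2)])
  have three: "(0 :: nat \<Rightarrow> 'a)(i := 1) + 0(j := 1) + 0(k := 1) \<in> vecs m"
    by (rule add_vecs[OF two units_vecs(3)])
  show ?thesis
    using rev_image_eqI[OF imageI[OF units_vecs(1), of dotp_values], of 2 card]
      rev_image_eqI[OF imageI[OF two, of dotp_values], of 4 card]
      rev_image_eqI[OF imageI[OF three, of dotp_values], of 8 card]
      card_dotp_values_unit card_dotp_values_two_units card_dotp_values_three_units
    by simp
qed

end

lemma dotp_values_card_2_4_8_if_two_exclusive:
  assumes "(L - (M \<union> N) \<noteq> {} \<and> M - (N \<union> L) \<noteq> {})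
         \<or> (M - (N \<union> L) \<noteq> {} \<and> N - (L \<union> M) \<noteq> {})
         \<or> (L - (M \<union> N) \<noteq> {} \<and> N - (L \<union> M) \<noteq> {})"
  shows "{2, 4, 8} \<subseteq> card ` dotp_values ` vecs m"
  using assms
proof (elim disjE conjE)
  assume "L - (M \<union> N) \<noteq> {}" "M - (N \<union> L) \<noteq> {}"
  then obtain i j k where i: "i \<in> L - (M \<union> N)" and j: "j \<in> M - (N \<union> L)" and k: "k \<in> N"
    using nonempty by blast
  have "i \<in> {1..m}" "j \<in> {1..m}" "k \<in> {1..m}" "distinct [i, j, k]"
    using i j k subset by auto
  then show ?thesis
    using D_apply(2)[OF _ i] D_apply(3)[OF _ j]
      unit_in_D(1)[OF DiffD1[OF i]] unit_in_D(2)[OF DiffD1[OF j]] unit_in_D(3)[OF k] F2_independent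
    by (rule dotp_values_card_2_4_8)
next
  assume "M - (N \<union> L) \<noteq> {}" "N - (L \<union> M) \<noteq> {}"
  then obtain i j k where i: "i \<in> M - (N \<union> L)" and j: "j \<in> N - (L \<union> M)" and k: "k \<in> L"
    using nonempty by blast
  have "i \<in> {1..m}" "j \<in> {1..m}" "k \<in> {1..m}" "distinct [i, j, k]"
    using i j k subset by auto
  then show ?thesis
    using D_apply(3)[OF _ i] D_apply(4)[OF _ j]
      unit_in_D(2)[OF DiffD1[OF i]] unit_in_D(3)[OF DiffD1[OF j]] unit_in_D(1)[OF k]
      F2_independent_rotate[OF F2_independent]
    by (rule dotp_values_card_2_4_8)
next
  assume "L - (M \<union> N) \<noteq> {}" "N - (L \<union> M) \<noteq> {}"
  then obtain i j k where i: "i \<in> L - (M \<union> N)" and j: "j \<in> N - (L \<union> M)" and k: "k \<in> M"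
    using nonempty by blast
  have "i \<in> {1..m}" "j \<in> {1..m}" "k \<in> {1..m}" "distinct [i, j, k]"
    using i j k subset by auto
  then show ?thesis
    using D_apply(2)[OF _ i] D_apply(4)[OF _ j]
      unit_in_D(1)[OF DiffD1[OF i]] unit_in_D(3)[OF DiffD1[OF j]] unit_in_D(2)[OF k]
      F2_independent_swap[OF F2_independent]
    by (rule dotp_values_card_2_4_8)
qed

lemma wt_image_C:
  assumes "{2, 4, 8} \<subseteq> card ` dotp_values ` vecs m"
  shows "wt Ds ` C = {0, 2^(s-1), 6 * 2^(s-3), 7 * 2^(s-3)}"
proof -
  let ?w = "[0, 2^(s-1), 6 * 2^(s-3), 7 * 2^(s-3)] :: nat list"
  have C_eq: "wt Ds ` C = (\<lambda>v. wt Ds (cw m Ds v)) ` vecs m"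
    by (simp add: C_def code_def image_image)
  have realized: "?w ! k \<in> wt Ds ` C"
    if "v \<in> vecs m" "card (dotp_values v) = 2^k" "k \<le> 3" for v k
    unfolding C_eq image_iff using that(1) wt_cw_Ds[OF that(2,3)] by metis
  have "(0 :: nat \<Rightarrow> 'a) \<in> vecs m" "card (dotp_values 0) = 2^0"
    using zero_in_D by (auto simp: vecs_def dotp_values_def dotp_def image_constant_conv)
  from realized[OF this] have "0 \<in> wt Ds ` C"
    by simp
  moreover obtain v1 v2 v3 where "v1 \<in> vecs m" "card (dotp_values v1) = 2^1"
    and "v2 \<in> vecs m" "card (dotp_values v2) = 2^2"
    and "v3 \<in> vecs m" "card (dotp_values v3) = 2^3"
    using assms by (auto simp: image_iff)
  from realized[OF this(1,2)] realized[OF this(3,4)] realized[OF this(5,6)]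
  have "2^(s-1) \<in> wt Ds ` C" "6 * 2^(s-3) \<in> wt Ds ` C" "7 * 2^(s-3) \<in> wt Ds ` C"
    by simp_all
  moreover have "wt Ds (cw m Ds v) \<in> set ?w" for v
  proof (cases rule: card_dotp_values[of v])
    case (1 k)
    then show ?thesis
      using wt_cw_Ds[OF 1(2,1)] nth_mem[of k ?w] by simp
  qed
  then have "wt Ds ` C \<subseteq> set ?w"
    unfolding C_eq by blast
  ultimately show ?thesis
    by auto
qed

lemma weights_C:
  assumes "{2, 4, 8} \<subseteq> card ` dotp_values ` vecs m"
  shows "weights Ds C = {2^(s-1), 6 * 2^(s-3), 7 * 2^(s-3)}"
  using weights_code[OF finite_Ds, of m] wt_image_C[OF assms] by (auto simp: C_def)

lemma exists_unit_in_Ds: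
  assumes "i \<in> U"
  obtains \<alpha> where "\<alpha> \<noteq> 0" "0(i := \<alpha>) \<in> Ds"
proof -
  have nonzero: "(1::'a) \<noteq> 0" "\<omega> \<noteq> 0" "\<omega>^2 \<noteq> 0"
    using F2_independent_distinct[OF F2_independent] by auto
  have in_Ds: "0(i := \<alpha>) \<in> Ds" if "\<alpha> \<noteq> 0" "0(i := \<alpha>) \<in> D" for \<alpha>
    using that by (auto simp: Ds_def fun_eq_iff)
  from assms consider "i \<in> L" | "i \<in> M" | "i \<in> N"
    unfolding U_def by blast
  then show thesis
  proof cases
    case 1
    show thesis by (rule that[OF nonzero(1) in_Ds[OF nonzero(1) unit_in_D(1)[OF 1]]])
  next
    case 2
    show thesis by (rule that[OF nonzero(2) in_Ds[OF nonzero(2) unit_in_D(2)[OF 2]]])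
  next
    case 3
    show thesis by (rule that[OF nonzero(3) in_Ds[OF nonzero(3) unit_in_D(3)[OF 3]]])
  qed
qed

lemma cw_Ds_eq_0_iff: "cw m Ds v = 0 \<longleftrightarrow> (\<forall>i\<in>U. v i = 0)"
proof
  assume cw0: "cw m Ds v = 0"
  show "\<forall>i\<in>U. v i = 0"
  proof
    fix i assume "i \<in> U"
    then obtain \<alpha> where "\<alpha> \<noteq> 0" "0(i := \<alpha>) \<in> Ds"
      by (rule exists_unit_in_Ds)
    moreover have "dotp m v (0(i := \<alpha>)) = v i * \<alpha>"
      using \<open>i \<in> U\<close> U_subset by (intro dotp_fun_upd_right) auto
    ultimately show "v i = 0"
      using fun_cong[OF cw0, of "0(i := \<alpha>)"] by (simp add: cw_def)
  qed
next
  assume v0: "\<forall>i\<in>U. v i = 0"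
  have "dotp m v d = 0" if "d \<in> D" for d
    unfolding dotp_def
  proof (rule sum.neutral, rule ballI)
    fix i
    show "v i * d i = 0"
      using v0 D_apply(1)[OF that, of i] by (cases "i \<in> U") simp_all
  qed
  then show "cw m Ds v = 0"
    by (simp add: cw_def Ds_def fun_eq_iff)
qed

lemma card_kernel: "card {v\<in>vecs m. cw m Ds v = 0} = 2^(3 * (m - card U))"
proof -
  have "{v\<in>vecs m. cw m Ds v = 0} = {v. \<forall>i. i \<notin> {1..m} - U \<longrightarrow> v i = 0}"
    unfolding cw_Ds_eq_0_iff vecs_def by blast
  moreover have "card ({1..m} - U) = m - card U"
    using U_subset by (simp add: card_Diff_subset finite_subset)
  ultimately show ?thesis
    using card_vanishing_outside(1)[OF finite_UNIV, of "{1..m} - U"] card_UNIV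
    by (simp add: power_mult)
qed

definition coord_word :: "nat \<Rightarrow> (nat \<Rightarrow> 'a) \<Rightarrow> 'a" where
  "coord_word i = cw m Ds (0(i := 1))"

lemma coord_word_apply: "i \<in> U \<Longrightarrow> coord_word i d = (if d \<in> Ds then d i else 0)"
  using U_subset by (auto simp: coord_word_def cw_def dotp_fun_upd_left)

lemma cw_Ds_eq_sum_coord_word: "cw m Ds v = (\<Sum>i\<in>U. cscale (v i) (coord_word i))"
proof
  fix d
  have "cw m Ds v d = (if d \<in> Ds then \<Sum>i\<in>U. v i * d i else 0)"
  proof (cases "d \<in> Ds")
    case True
    then have "d \<in> D" by (simp add: Ds_def)
    have "dotp m v d = (\<Sum>i\<in>U. v i * d i)"
      unfolding dotp_def using U_subset D_apply(1)[OF \<open>d \<in> D\<close>]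
      by (intro sum.mono_neutral_right) auto
    with True show ?thesis by (simp add: cw_def)
  qed (simp add: cw_def)
  also have "\<dots> = (\<Sum>i\<in>U. cscale (v i) (coord_word i)) d"
    by (simp add: sum_fun_apply cscale_def coord_word_apply cong: sum.cong)
  finally show "cw m Ds v d = (\<Sum>i\<in>U. cscale (v i) (coord_word i)) d" .
qed

lemma span_coord_word: "fun_space.span (coord_word ` U) = C"
proof (rule fun_space.span_subspace)
  show "coord_word ` U \<subseteq> C"
    using U_subset by (auto simp: coord_word_def C_def code_def vecs_def)
  show "C \<subseteq> fun_space.span (coord_word ` U)"
    unfolding C_def code_def
  proof (rule image_subsetI)
    fix v
    show "cw m Ds v \<in> fun_space.span (coord_word ` U)"
      unfolding cw_Ds_eq_sum_coord_word
      by (intro fun_space.span_sum fun_space.span_scale fun_space.span_base imageI)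
  qed
  show "fun_space.subspace C"
    by (simp add: C_def subspace_code)
qed

lemma dim_C: "fun_space.dim C = card U"
proof -
  have "\<forall>j\<in>U. \<exists>a. a \<noteq> 0 \<and> 0(j := a) \<in> Ds"
    using exists_unit_in_Ds by metis
  then obtain \<alpha> where \<alpha>: "\<And>j. j \<in> U \<Longrightarrow> \<alpha> j \<noteq> 0 \<and> 0(j := \<alpha> j) \<in> Ds"
    by metis
  have "coord_word i (0(j := \<alpha> j)) \<noteq> 0 \<longleftrightarrow> i = j" if "i \<in> U" "j \<in> U" for i j
    using coord_word_apply[OF that(1)] \<alpha>[OF that(2)] by simp
  then have "fun_space.dim (fun_space.span (coord_word ` U)) = card U"
    using finite_subset[OF U_subset] by (intro dim_span_eq_card_if_dual_points) auto
  then show ?thesis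
    by (simp add: span_coord_word)
qed

lemma codewords_wt_0: "{c\<in>C. wt Ds c = 0} = {0}"
  using wt_code_eq_0_iff[OF finite_Ds] fun_space.subspace_0[OF subspace_code]
  by (auto simp: C_def)

lemma card_vecs_wt_eq:
  "card {v\<in>vecs m. wt Ds (cw m Ds v) = i} = card {c\<in>C. wt Ds c = i} * 2^(3 * (m - card U))"
  using card_wt_preimage[OF finite_UNIV] card_kernel by (simp add: C_def)

end

theorem mainTheorem3:
  fixes \<omega> :: "'a::field" and m :: nat and L M N :: "nat set"
  assumes F8: "card (UNIV :: 'a set) = 8"
    and root: "\<omega>^3 + \<omega> + 1 = 0"
    and LMN: "L \<subseteq> {1..m}" "M \<subseteq> {1..m}" "N \<subseteq> {1..m}"
    and ne: "L \<noteq> {}" "M \<noteq> {}" "N \<noteq> {}"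
    and two: "(L - (M \<union> N) \<noteq> {} \<and> M - (N \<union> L) \<noteq> {})
            \<or> (M - (N \<union> L) \<noteq> {} \<and> N - (L \<union> M) \<noteq> {})
            \<or> (L - (M \<union> N) \<noteq> {} \<and> N - (L \<union> M) \<noteq> {})"
  shows "let Ds = comb3 \<omega> (Delta L) (Delta M) (Delta N) - {0};
             C = code m Ds;
             s = card L + card M + card N;
             A = (\<lambda>i. card {c \<in> C. wt Ds c = i});
             Z = (\<lambda>i. card {v \<in> vecs m. wt Ds (cw m Ds v) = i})
         in module.subspace cscale C
    \<and> card Ds = 2^s - 1
    \<and> vector_space.dim cscale C = card (L \<union> M \<union> N)
    \<and> min_dist Ds C = 2^(s-1)
    \<and> l_weight_code 3 Ds C
    \<and> wt Ds ` C = {0, 2^(s-1), 6 * 2^(s-3), 7 * 2^(s-3)}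
    \<and> Z 0 = 2^(3 * (m - card (L \<union> M \<union> N)))
    \<and> (\<forall>i \<le> card Ds. Z i = Z 0 * A i)"
proof -
  interpret code_setting \<omega> m L M N
    using F8 root LMN ne by unfold_locales
  have realized: "{2, 4, 8} \<subseteq> card ` dotp_values ` vecs m"
    using two by (rule dotp_values_card_2_4_8_if_two_exclusive)
  show ?thesis
    unfolding Let_def D_def[symmetric] Ds_def[symmetric] C_def[symmetric] s_def[symmetric] U_def[symmetric]
  proof (intro conjI allI impI)
    show "fun_space.subspace C"
      by (simp add: C_def subspace_code)
    show "card Ds = 2^s - 1"
      by (rule card_Ds)
    show "fun_space.dim C = card U"
      by (rule dim_C)
    show "min_dist Ds C = 2^(s-1)" "l_weight_code 3 Ds C"
      using weight_values_card_Min[OF three_le_s]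
      by (simp_all add: min_dist_def l_weight_code_def weights_C[OF realized])
    show "wt Ds ` C = {0, 2^(s-1), 6 * 2^(s-3), 7 * 2^(s-3)}"
      by (rule wt_image_C[OF realized])
    show "card {v\<in>vecs m. wt Ds (cw m Ds v) = 0} = 2^(3 * (m - card U))"
      using card_vecs_wt_eq[of 0] codewords_wt_0 by simp
    fix i
    show "card {v\<in>vecs m. wt Ds (cw m Ds v) = i}
      = card {v\<in>vecs m. wt Ds (cw m Ds v) = 0} * card {c\<in>C. wt Ds c = i}"
      using card_vecs_wt_eq[of i] card_vecs_wt_eq[of 0] codewords_wt_0 by simp
  qed
qed

end
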